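(* Let $k\geq2$ and let $L=(l_1,\dots,l_k)$ be positive integers with sum $n$ which are generic and reduced. Then the Euler characteristic of $Tonn^{n,k}(L)$ is $0$.
   Context: $L=(l_1,\dots,l_k)$ is generic if for all subsets $I,J\subseteq[k]$, $\sum_{i\in I}l_i=\sum_{j\in J}l_j$ implies $I=J$. $L$ is reduced if $\gcd(l_1,\dots,l_k)=1$. The generalized tonnetz $Tonn^{n,k}(L)$ is the simplicial complex on vertex set $\mathbb{Z}_n$ whose maximal simplices are the sets $\Delta(x;\sigma)=\{x,\,x+l_{\sigma(1)},\dots,x+l_{\sigma(1)}+\dots+l_{\sigma(k-1)}\}$ (sums in $\mathbb{Z}_n$), for $x\in\mathbb{Z}_n$ and $\sigma\in S_k$; its simplices are all subsets of these sets. *)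

theory Defs
  imports Main "HOL-Combinatorics.Permutations"
begin

text \<open>Lengths L = (l 0, ..., l (k-1)) indexed from 0; vertices of Z_n are 0..<n,
  sums taken mod n. Permutations sigma of {0..<k}.\<close>

definition tonnetz_max :: "nat \<Rightarrow> nat \<Rightarrow> (nat \<Rightarrow> nat) \<Rightarrow> nat set set" where
  "tonnetz_max n k l =
     {{(x + (\<Sum>j<i. l (\<sigma> j))) mod n | i. i < k} | x \<sigma>. x < n \<and> \<sigma> permutes {..<k}}"

text \<open>All simplices (including the empty face).\<close>
definition tonnetz :: "nat \<Rightarrow> nat \<Rightarrow> (nat \<Rightarrow> nat) \<Rightarrow> nat set set" where
  "tonnetz n k l = {F. \<exists>D\<in>tonnetz_max n k l. F \<subseteq> D}"

definition generic :: "nat \<Rightarrow> (nat \<Rightarrow> nat) \<Rightarrow> bool" where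
  "generic k l \<longleftrightarrow> (\<forall>I J. I \<subseteq> {..<k} \<longrightarrow> J \<subseteq> {..<k} \<longrightarrow>
      (\<Sum>i\<in>I. l i) = (\<Sum>j\<in>J. l j) \<longrightarrow> I = J)"

definition reduced :: "nat \<Rightarrow> (nat \<Rightarrow> nat) \<Rightarrow> bool" where
  "reduced k l \<longleftrightarrow> Gcd (l ` {..<k}) = 1"

definition euler_char :: "'a set set \<Rightarrow> int" where
  "euler_char K = (\<Sum>F\<in>{F\<in>K. F \<noteq> {}}. (-1) ^ (card F - 1))"

end

theory Submission
  imports Defs
begin

(*
  A nonempty face F of the tonnetz with least vertex y has the form
  {y} \<union> {y + l(C) | C \<in> X}, where l(C) is the sum of the l i over i \<in> C and X is a chain of
  nonempty subsets C of {0..k-1} with y + l(C) < n.  For generic L the pair (y, X) is determined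
  by F, and |F| = |X| + 1, so the Euler characteristic is the sum over y < n of the alternating
  count of such chains.  For a down-closed family Q of nonempty finite sets the alternating count
  of chains in Q is 1 + \<Sum>_{T\<in>Q} (-1)^|T| (barycentric subdivision preserves the Euler
  characteristic).  Exchanging the summations leaves \<Sum>_{T \<subseteq> {0..k-1}} (-1)^|T| (n - l(T)),
  which vanishes as soon as k \<ge> 2.
*)

lemma sum_Pow_remove:
  assumes "finite A" "a \<in> A"
  shows "(\<Sum>T\<in>Pow A. f T) = (\<Sum>T\<in>Pow (A - {a}). f T + f (insert a T))"
proof -
  have "Pow A = Pow (A - {a}) \<union> insert a ` Pow (A - {a})"
    using assms(2) Pow_insert[of a "A - {a}"] by (simp add: insert_absorb)
  then have "(\<Sum>T\<in>Pow A. f T) = (\<Sum>T\<in>Pow (A - {a}). f T) + (\<Sum>T\<in>insert a ` Pow (A - {a}). f T)"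
    using assms by (simp only:) (rule sum.union_disjoint; auto intro: finite_subset)
  also have "(\<Sum>T\<in>insert a ` Pow (A - {a}). f T) = (\<Sum>T\<in>Pow (A - {a}). f (insert a T))"
    by (rule sum.reindex_cong[where l = "insert a"]) (auto intro!: inj_onI)
  finally show ?thesis by (simp add: sum.distrib)
qed

lemma alternating_sum_Pow_eq_0:
  assumes "finite A" "A \<noteq> {}"
  shows "(\<Sum>T\<in>Pow A. (-1) ^ card T) = (0::'a::comm_ring_1)"
  using prod_diff_conv_sum[OF assms(1), of "\<lambda>_. 1" "\<lambda>_. 1 :: 'a"] assms
  by (simp add: power_0_left card_eq_0_iff)

lemma alternating_sum_Pow_sum_eq_0:
  fixes w :: "'b \<Rightarrow> 'a::comm_ring_1"
  assumes "finite A" "2 \<le> card A"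
  shows "(\<Sum>T\<in>Pow A. (-1) ^ card T * sum w T) = 0"
proof -
  obtain a where a: "a \<in> A" using assms by fastforce
  have "A - {a} \<noteq> {}"
    using assms card_Diff_singleton[OF a] by fastforce
  have "(\<Sum>T\<in>Pow A. (-1) ^ card T * sum w T)
      = (\<Sum>T\<in>Pow (A - {a}). (-1) ^ card T * sum w T + (-1) ^ card (insert a T) * sum w (insert a T))"
    by (rule sum_Pow_remove[OF assms(1) a])
  also have "\<dots> = (\<Sum>T\<in>Pow (A - {a}). - w a * (-1) ^ card T)"
  proof (rule sum.cong[OF refl])
    fix T assume "T \<in> Pow (A - {a})"
    then have "finite T" "a \<notin> T" using assms(1) finite_subset by auto
    then show "(-1) ^ card T * sum w T + (-1) ^ card (insert a T) * sum w (insert a T)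
        = - w a * (-1) ^ card T"
      by (simp add: algebra_simps)
  qed
  also have "\<dots> = - w a * (\<Sum>T\<in>Pow (A - {a}). (-1) ^ card T)"
    by (simp add: sum_distrib_left)
  also have "\<dots> = 0"
    using alternating_sum_Pow_eq_0[OF _ \<open>A - {a} \<noteq> {}\<close>, where 'a = 'a] assms(1) by simp
  finally show ?thesis .
qed

lemma alternating_sum_proper_subsets:
  assumes "finite T" "T \<noteq> {}"
  shows "(\<Sum>S\<in>Pow T - {{}, T}. (-1) ^ card S :: 'a::comm_ring_1) = - 1 - (-1) ^ card T"
proof -
  have "(\<Sum>S\<in>Pow T. (-1) ^ card S)
      = (\<Sum>S\<in>Pow T - {{}, T}. (-1) ^ card S) + (\<Sum>S\<in>{{}, T}. (-1) ^ card S :: 'a)"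
    using assms(1) by (intro sum.subset_diff) auto
  then have "(\<Sum>S\<in>Pow T - {{}, T}. (-1) ^ card S) + (1 + (-1) ^ card T) = (0::'a)"
    using alternating_sum_Pow_eq_0[OF assms, where 'a = 'a] assms by simp
  then have "(\<Sum>S\<in>Pow T - {{}, T}. (-1) ^ card S) = - (1 + (-1) ^ card T :: 'a)"
    by (simp only: eq_neg_iff_add_eq_0)
  then show ?thesis by simp
qed

lemma finite_chains: "finite Q \<Longrightarrow> finite (chains Q)"
  unfolding chains_def by (rule finite_subset[of _ "Pow Q"]) auto

lemma chains_minus_empty_eq_image:
  assumes "finite Q"
  shows "chains Q - {{}} = (\<lambda>(T, X). insert T X) ` (SIGMA T:Q. chains {C\<in>Q. C \<subset> T})"
proof (intro equalityI subsetI)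
  fix X assume X: "X \<in> chains Q - {{}}"
  then have "finite X" using assms unfolding chains_def by (auto intro: finite_subset)
  then have top: "\<Union>X \<in> X"
    using X by (intro Union_in_chain) (auto simp: chains_alt_def)
  have "X - {\<Union>X} \<in> chains {C\<in>Q. C \<subset> \<Union>X}"
    using X unfolding chains_def chain_subset_def by auto
  moreover have "X = insert (\<Union>X) (X - {\<Union>X})" using top by auto
  ultimately show "X \<in> (\<lambda>(T, X). insert T X) ` (SIGMA T:Q. chains {C\<in>Q. C \<subset> T})"
    using top X by (intro image_eqI[of _ _ "(\<Union>X, X - {\<Union>X})"]) (auto simp: chains_def)
next
  fix Y assume "Y \<in> (\<lambda>(T, X). insert T X) ` (SIGMA T:Q. chains {C\<in>Q. C \<subset> T})"
  then obtain T X where "T \<in> Q" "X \<in> chains {C\<in>Q. C \<subset> T}" "Y = insert T X" by auto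
  then show "Y \<in> chains Q - {{}}"
    unfolding chains_def chain_subset_def by auto
qed

lemma inj_on_insert_top:
  "inj_on (\<lambda>(T, X). insert T X) (SIGMA T:Q. chains {C\<in>Q. C \<subset> T})"
proof (rule inj_onI, clarify)
  fix T X T' X'
  assume X: "X \<in> chains {C\<in>Q. C \<subset> T}" and X': "X' \<in> chains {C\<in>Q. C \<subset> T'}"
    and eq: "insert T X = insert T' X'"
  have "T = \<Union>(insert T X)" "T' = \<Union>(insert T' X')"
    using X X' unfolding chains_def by auto
  then have "T = T'" using eq by simp
  moreover have "T \<notin> X" "T' \<notin> X'" using X X' unfolding chains_def by auto
  ultimately show "T = T' \<and> X = X'" using eq by (simp add: insert_ident)
qed

lemma alternating_sum_chains_by_top:
  assumes "finite Q"
  shows "(\<Sum>X\<in>chains Q. (-1) ^ card X)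
    = 1 - (\<Sum>T\<in>Q. \<Sum>X\<in>chains {C\<in>Q. C \<subset> T}. (-1) ^ card X :: 'a::comm_ring_1)"
proof -
  have fin: "finite (chains {C\<in>Q. C \<subset> T})" for T
    using assms by (intro finite_chains) auto
  have card_insert_top: "card (insert T X) = Suc (card X)" if "X \<in> chains {C\<in>Q. C \<subset> T}" for T X
    using that fin[of T] finite_chains[OF assms] unfolding chains_def
    by (subst card_insert_disjoint) (auto intro: finite_subset[OF _ assms])
  have "{} \<in> chains Q" by (simp add: chains_def chain_subset_def)
  then have "(\<Sum>X\<in>chains Q. (-1) ^ card X) = 1 + (\<Sum>X\<in>chains Q - {{}}. (-1) ^ card X :: 'a)"
    using finite_chains[OF assms] by (simp add: sum.remove)
  also have "(\<Sum>X\<in>chains Q - {{}}. (-1) ^ card X :: 'a)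
      = (\<Sum>(T, X)\<in>(SIGMA T:Q. chains {C\<in>Q. C \<subset> T}). (-1) ^ card (insert T X))"
    unfolding chains_minus_empty_eq_image[OF assms]
    by (subst sum.reindex[OF inj_on_insert_top]) (simp add: case_prod_beta')
  also have "\<dots> = (\<Sum>T\<in>Q. \<Sum>X\<in>chains {C\<in>Q. C \<subset> T}. - ((-1) ^ card X))"
    using assms fin by (subst sum.Sigma) (auto simp: card_insert_top intro!: sum.cong)
  finally show ?thesis by (simp add: sum_negf)
qed

lemma alternating_sum_chains_down_closed:
  assumes "finite Q" "{} \<notin> Q"
    and down_closed: "\<And>T S. T \<in> Q \<Longrightarrow> S \<subseteq> T \<Longrightarrow> S \<noteq> {} \<Longrightarrow> S \<in> Q"
  shows "(\<Sum>X\<in>chains Q. (-1) ^ card X) = 1 + (\<Sum>T\<in>Q. (-1) ^ card T :: 'a::comm_ring_1)"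
  using assms
proof (induction "card Q" arbitrary: Q rule: less_induct)
  case (less Q)
  have "(\<Sum>X\<in>chains {C\<in>Q. C \<subset> T}. (-1) ^ card X) = - ((-1) ^ card T :: 'a)" if T: "T \<in> Q" for T
  proof -
    have below: "{C\<in>Q. C \<subset> T} = Pow T - {{}, T}"
      using less.prems T by auto
    have "Pow T - {{}} \<subseteq> Q" using less.prems(3)[OF T] by auto
    then have "finite (Pow T - {{}})" using less.prems(1) by (rule finite_subset)
    then have "finite T" by simp
    moreover have "T \<noteq> {}" using T less.prems(2) by auto
    moreover have "card {C\<in>Q. C \<subset> T} < card Q"
      using T less.prems(1) by (intro psubset_card_mono) auto
    then have "(\<Sum>X\<in>chains {C\<in>Q. C \<subset> T}. (-1) ^ card X)
        = 1 + (\<Sum>S\<in>{C\<in>Q. C \<subset> T}. (-1) ^ card S :: 'a)"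
      by (rule less.hyps) (use less.prems in auto)
    ultimately show ?thesis
      using alternating_sum_proper_subsets[of T, where 'a = 'a] by (simp add: below)
  qed
  then show ?case
    using alternating_sum_chains_by_top[OF less.prems(1), where 'a = 'a] by (simp add: sum_negf)
qed

lemma chain_prefixes_of_list:
  assumes "finite X" "chain\<^sub>\<subseteq> X" "\<forall>C\<in>X. C \<subseteq> A" "finite A"
  shows "\<exists>xs. distinct xs \<and> set xs = A \<and> (\<forall>C\<in>X. \<exists>i. set (take i xs) = C)"
  using assms
proof (induction "card X" arbitrary: X A rule: less_induct)
  case (less X A)
  show ?case
  proof (cases "X = {}")
    case True
    then show ?thesis using finite_distinct_list[OF less.prems(4)] by auto
  next
    case False
    let ?M = "\<Union>X"
    have M: "?M \<in> X"
      using less.prems False by (intro Union_in_chain) (auto simp: chain_subset_alt_def)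
    then have "card (X - {?M}) < card X"
      using less.prems(1) False by (simp add: card_gt_0_iff)
    moreover have "chain\<^sub>\<subseteq> (X - {?M})" using less.prems(2) unfolding chain_subset_def by auto
    moreover have "finite ?M" using M less.prems(3,4) finite_subset by blast
    moreover have "\<forall>C\<in>X - {?M}. C \<subseteq> ?M" by auto
    ultimately obtain ys where ys: "distinct ys" "set ys = ?M" "\<forall>C\<in>X - {?M}. \<exists>i. set (take i ys) = C"
      using less.hyps[of "X - {?M}" ?M] less.prems(1) by auto
    obtain zs where zs: "distinct zs" "set zs = A - ?M"
      using finite_distinct_list[of "A - ?M"] less.prems(4) by auto
    have "\<exists>i. set (take i (ys @ zs)) = C" if C: "C \<in> X" for C
    proof (cases "C = ?M")
      case True
      then show ?thesis using ys by (intro exI[of _ "length ys"]) auto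
    next
      case False
      then have "C \<in> X - {?M}" using C by simp
      then obtain i where "set (take i ys) = C" using ys(3) by blast
      then show ?thesis by (intro exI[of _ "min i (length ys)"]) (auto simp: min_def)
    qed
    moreover have "distinct (ys @ zs)" "set (ys @ zs) = A"
      using ys zs less.prems(3) M by auto
    ultimately show ?thesis by blast
  qed
qed

lemma chain_initial_segments_permutation:
  fixes X :: "nat set set"
  assumes "finite X" "chain\<^sub>\<subseteq> X" "\<forall>C\<in>X. C \<subseteq> {..<k}"
  shows "\<exists>\<sigma>. \<sigma> permutes {..<k} \<and> (\<forall>C\<in>X. \<exists>i\<le>k. C = \<sigma> ` {..<i})"
proof -
  obtain xs where xs: "distinct xs" "set xs = {..<k}" "\<forall>C\<in>X. \<exists>i. set (take i xs) = C"
    using chain_prefixes_of_list[OF assms finite_lessThan[of k]] by auto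
  have len: "length xs = k" using xs distinct_card by fastforce
  define \<sigma> where "\<sigma> j = (if j < k then xs ! j else j)" for j
  have "bij_betw ((!) xs) {..<k} {..<k}" using xs len by (intro bij_betw_nth) auto
  then have "bij_betw \<sigma> {..<k} {..<k}"
    by (rule bij_betw_cong[THEN iffD1, rotated]) (simp add: \<sigma>_def)
  then have "\<sigma> permutes {..<k}"
    by (rule bij_imp_permutes) (simp add: \<sigma>_def)
  moreover have "\<exists>i\<le>k. C = \<sigma> ` {..<i}" if C: "C \<in> X" for C
  proof -
    obtain i where i: "set (take i xs) = C" using xs C by auto
    have "\<sigma> ` {..<min i k} = (!) xs ` {0..<min i k}"
      by (auto simp: \<sigma>_def)
    also have "\<dots> = C" using i len by (cases "i \<le> k") (simp_all add: nth_image min_def)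
    finally show ?thesis by (intro exI[of _ "min i k"]) auto
  qed
  ultimately show ?thesis by blast
qed

lemma sum_permutes_lessThan:
  assumes "\<sigma> permutes {..<k}"
  shows "(\<Sum>j<i. l (\<sigma> j)) = sum l (\<sigma> ` {..<i})"
proof -
  have "inj_on \<sigma> {..<i}" using permutes_inj[OF assms] by (auto intro: inj_on_subset)
  then show ?thesis by (simp add: sum.reindex)
qed

lemma partial_sum_permutes_less:
  fixes l :: "nat \<Rightarrow> nat"
  assumes "\<sigma> permutes {..<k}" "\<forall>i<k. l i > 0" "i < k"
  shows "(\<Sum>j<i. l (\<sigma> j)) < (\<Sum>j<k. l j)"
proof -
  have "(\<Sum>j<i. l (\<sigma> j)) < (\<Sum>j<Suc i. l (\<sigma> j))"
    using assms permutes_in_image[OF assms(1)] by simp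
  also have "\<dots> \<le> (\<Sum>j<k. l (\<sigma> j))"
    using assms(3) by (intro sum_mono2) auto
  also have "\<dots> = (\<Sum>j<k. l j)"
    using sum_permutes_lessThan[OF assms(1), of l k] permutes_image[OF assms(1)] by simp
  finally show ?thesis .
qed

lemma rotation_permutes:
  fixes a k :: nat
  assumes "a < k"
  shows "(\<lambda>j. if j < k then (a + j) mod k else j) permutes {..<k}"
proof (rule bij_imp_permutes)
  let ?r = "\<lambda>j. if j < k then (a + j) mod k else j"
  have wrap: "(a + j) mod k = (if a + j < k then a + j else a + j - k)" if "j < k" for j
    using assms that by (simp add: le_mod_geq)
  have "inj_on ?r {..<k}"
    by (intro inj_onI) (auto simp: wrap split: if_splits)
  moreover have "?r ` {..<k} = {..<k}"
    using assms by (intro endo_inj_surj[OF _ _ calculation]) auto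
  ultimately show "bij_betw ?r {..<k} {..<k}" by (simp add: bij_betw_def)
qed simp

lemma sum_lessThan_rotate:
  fixes g :: "nat \<Rightarrow> 'a::comm_monoid_add"
  assumes "a < k" "j \<le> k"
  shows "(\<Sum>t<a. g t) + (\<Sum>t<j. g ((a + t) mod k))
    = (if a + j < k then (\<Sum>t<a + j. g t) else (\<Sum>t<k. g t) + (\<Sum>t<a + j - k. g t))"
  using assms(2)
proof (induction j)
  case (Suc j)
  have "(a + j) mod k = (if a + j < k then a + j else a + j - k)"
    using assms(1) Suc.prems by (simp add: le_mod_geq)
  moreover have "a + Suc j - k = Suc (a + j - k)" if "\<not> a + j < k"
    using that by simp
  ultimately show ?case
    using Suc by (auto simp: add.assoc[symmetric] not_less le_Suc_eq)
qed (use assms in simp)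

lemma tonnetz_max_rebase:
  fixes l :: "nat \<Rightarrow> nat"
  assumes "D \<in> tonnetz_max n k l" "y \<in> D" "n dvd (\<Sum>i<k. l i)"
  shows "\<exists>\<tau>. \<tau> permutes {..<k} \<and> D = {(y + (\<Sum>j<i. l (\<tau> j))) mod n | i. i < k}"
proof -
  obtain x \<sigma> where \<sigma>: "\<sigma> permutes {..<k}" and D: "D = {(x + (\<Sum>j<i. l (\<sigma> j))) mod n | i. i < k}"
    using assms(1) unfolding tonnetz_max_def by blast
  define S where "S i = (\<Sum>j<i. l (\<sigma> j))" for i
  obtain a where a: "a < k" "y = (x + S a) mod n" using assms(2) D S_def by auto
  define \<rho> where "\<rho> j = (if j < k then (a + j) mod k else j)" for j
  have \<rho>: "\<rho> permutes {..<k}" unfolding \<rho>_def by (rule rotation_permutes[OF a(1)])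
  obtain c where c: "S k = n * c"
    using assms(3) sum_permutes_lessThan[OF \<sigma>, of l k] permutes_image[OF \<sigma>]
    by (auto simp: S_def elim!: dvdE)
  have rebased: "(y + (\<Sum>t<j. l ((\<sigma> \<circ> \<rho>) t))) mod n = (x + S (\<rho> j)) mod n" if j: "j < k" for j
  proof -
    have "(\<Sum>t<j. l ((\<sigma> \<circ> \<rho>) t)) = (\<Sum>t<j. l (\<sigma> ((a + t) mod k)))"
      using j by (auto simp: \<rho>_def intro!: sum.cong)
    then have "S a + (\<Sum>t<j. l ((\<sigma> \<circ> \<rho>) t)) = (if a + j < k then S (a + j) else S k + S (a + j - k))"
      using sum_lessThan_rotate[OF a(1), of j "\<lambda>t. l (\<sigma> t)"] j by (simp add: S_def)
    moreover have "\<rho> j = (if a + j < k then a + j else a + j - k)"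
      using j a(1) by (simp add: \<rho>_def le_mod_geq)
    moreover have "(y + s) mod n = (x + (S a + s)) mod n" for s
      using a(2) by (simp add: mod_add_left_eq add.assoc)
    moreover have "(x + (n * c + s)) mod n = (x + s) mod n" for s
      by (metis add.left_commute mod_mult_self2 add.commute)
    ultimately show ?thesis by (simp add: c add.left_commute)
  qed
  have "D = (\<lambda>i. (x + S i) mod n) ` (\<rho> ` {..<k})"
    using D permutes_image[OF \<rho>] by (auto simp: S_def)
  also have "\<dots> = (\<lambda>i. (y + (\<Sum>j<i. l ((\<sigma> \<circ> \<rho>) j))) mod n) ` {..<k}"
    unfolding image_image using rebased by (intro image_cong) auto
  finally have "D = {(y + (\<Sum>j<i. l ((\<sigma> \<circ> \<rho>) j))) mod n | i. i < k}"
    by auto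
  then show ?thesis using permutes_compose[OF \<rho> \<sigma>] by (intro exI[of _ "\<sigma> \<circ> \<rho>"] conjI)
qed

(* The condition y + sum l T < n says that the walk from y does not wrap around modulo n. *)
definition fitting_subsets :: "nat \<Rightarrow> nat \<Rightarrow> (nat \<Rightarrow> nat) \<Rightarrow> nat \<Rightarrow> nat set set" where
  "fitting_subsets n k l y = {T. T \<subseteq> {..<k} \<and> T \<noteq> {} \<and> y + sum l T < n}"

definition chain_face :: "(nat \<Rightarrow> nat) \<Rightarrow> nat \<Rightarrow> nat set set \<Rightarrow> nat set" where
  "chain_face l y X = insert y ((\<lambda>C. y + sum l C) ` X)"

lemma finite_fitting_subsets: "finite (fitting_subsets n k l y)"
  unfolding fitting_subsets_def by (rule finite_subset[of _ "Pow {..<k}"]) auto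

lemma chain_face_in_tonnetz:
  fixes l :: "nat \<Rightarrow> nat"
  assumes "(\<Sum>i<k. l i) = n" "y < n" "X \<in> chains (fitting_subsets n k l y)"
  shows "chain_face l y X \<in> tonnetz n k l"
proof -
  have X: "X \<subseteq> fitting_subsets n k l y" "chain\<^sub>\<subseteq> X" using assms(3) unfolding chains_def by auto
  moreover have "finite X" using X(1) finite_fitting_subsets finite_subset by blast
  moreover have "\<forall>C\<in>X. C \<subseteq> {..<k}" using X(1) unfolding fitting_subsets_def by auto
  ultimately obtain \<sigma> where \<sigma>: "\<sigma> permutes {..<k}" and segments: "\<forall>C\<in>X. \<exists>i\<le>k. C = \<sigma> ` {..<i}"
    using chain_initial_segments_permutation by blast
  define D where "D = {(y + (\<Sum>j<i. l (\<sigma> j))) mod n | i. i < k}"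
  have "0 < k" using assms(1,2) by (cases k) auto
  have "D \<in> tonnetz_max n k l" unfolding D_def tonnetz_max_def using assms(2) \<sigma> by blast
  moreover have "y + sum l C \<in> D" if C: "C \<in> X" for C
  proof -
    obtain i where i: "i \<le> k" "C = \<sigma> ` {..<i}" using segments C by auto
    have fits: "y + sum l C < n" using C X(1) unfolding fitting_subsets_def by auto
    have "sum l (\<sigma> ` {..<k}) = n" using assms(1) permutes_image[OF \<sigma>] by simp
    then have "i < k" using i fits by (cases "i = k") auto
    then show ?thesis
      using fits i sum_permutes_lessThan[OF \<sigma>, of l i] unfolding D_def by force
  qed
  moreover have "y \<in> D" using \<open>0 < k\<close> assms(2) unfolding D_def by force
  ultimately show ?thesis unfolding tonnetz_def chain_face_def by blast
qed

lemma tonnetz_max_subset_lessThan: "D \<in> tonnetz_max n k l \<Longrightarrow> D \<subseteq> {..<n}"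
  unfolding tonnetz_max_def by auto

lemma tonnetz_face_walk_from_least:
  fixes l :: "nat \<Rightarrow> nat"
  assumes pos: "\<forall>i<k. l i > 0" and total: "(\<Sum>i<k. l i) = n"
    and D: "D \<in> tonnetz_max n k l" "F \<subseteq> D" and y: "y \<in> F" "\<forall>z\<in>F. y \<le> z"
  obtains \<tau> where "\<tau> permutes {..<k}" "F \<subseteq> {y + sum l (\<tau> ` {..<j}) | j. j < k}"
proof -
  have "y \<in> D" "n dvd (\<Sum>i<k. l i)" using y(1) D(2) total by auto
  then obtain \<tau> where \<tau>: "\<tau> permutes {..<k}"
    and D_eq: "D = {(y + (\<Sum>j<i. l (\<tau> j))) mod n | i. i < k}"
    using tonnetz_max_rebase[OF D(1)] by blast
  have "z \<in> {y + sum l (\<tau> ` {..<j}) | j. j < k}" if z: "z \<in> F" for z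
  proof -
    define St where "St j = (\<Sum>t<j. l (\<tau> t))" for j
    obtain j where j: "j < k" "z = (y + St j) mod n" using z D(2) D_eq St_def by auto
    have St_less: "St j < n"
      using partial_sum_permutes_less[OF \<tau> pos j(1)] total by (simp add: St_def)
    have "y < n" using \<open>y \<in> D\<close> tonnetz_max_subset_lessThan[OF D(1)] by auto
    have "y + St j < n"
    proof (rule ccontr)
      assume wraps: "\<not> y + St j < n"
      then have "z = y + St j - n" using j(2) St_less \<open>y < n\<close> by (simp add: le_mod_geq)
      then show False using y(2) z St_less wraps by auto
    qed
    then show ?thesis using j sum_permutes_lessThan[OF \<tau>, of l j] by (auto simp: St_def)
  qed
  then show ?thesis using that \<tau> by blast
qed

lemma tonnetz_face_eq_chain_face:
  fixes l :: "nat \<Rightarrow> nat"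
  assumes pos: "\<forall>i<k. l i > 0" and total: "(\<Sum>i<k. l i) = n"
    and F: "F \<in> tonnetz n k l" "F \<noteq> {}"
  obtains y X where "y < n" "X \<in> chains (fitting_subsets n k l y)" "F = chain_face l y X"
proof -
  obtain D where D: "D \<in> tonnetz_max n k l" "F \<subseteq> D" using F(1) unfolding tonnetz_def by auto
  then have below_n: "F \<subseteq> {..<n}" using tonnetz_max_subset_lessThan by blast
  then have "finite F" using finite_subset by blast
  define y where "y = Min F"
  have y: "y \<in> F" "\<forall>z\<in>F. y \<le> z" using \<open>finite F\<close> F(2) unfolding y_def by auto
  obtain \<tau> where \<tau>: "\<tau> permutes {..<k}" and walk: "F \<subseteq> {y + sum l (\<tau> ` {..<j}) | j. j < k}"
    using tonnetz_face_walk_from_least[OF pos total D y] .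
  define X where "X = {\<tau> ` {..<j} | j. 0 < j \<and> j < k \<and> y + sum l (\<tau> ` {..<j}) \<in> F}"
  have "X \<subseteq> fitting_subsets n k l y"
    using permutes_image[OF \<tau>] below_n
    by (fastforce simp: X_def fitting_subsets_def dest: image_mono[of "{..<_}" "{..<k}" \<tau>])
  moreover have "chain\<^sub>\<subseteq> X"
  proof -
    have "\<tau> ` {..<i} \<subseteq> \<tau> ` {..<j} \<or> \<tau> ` {..<j} \<subseteq> \<tau> ` {..<i}" for i j
      by (metis image_mono lessThan_subset_iff nat_le_linear)
    then show ?thesis unfolding X_def chain_subset_def by blast
  qed
  moreover have "F = chain_face l y X"
  proof
    show "F \<subseteq> chain_face l y X"
      using walk unfolding chain_face_def X_def by force
    show "chain_face l y X \<subseteq> F"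
      using y(1) unfolding chain_face_def X_def by auto
  qed
  moreover have "y < n" using y(1) below_n by auto
  ultimately show ?thesis using that unfolding chains_def by blast
qed

lemma inj_on_sum_generic:
  assumes "generic k l"
  shows "inj_on (sum l) (Pow {..<k})"
  using assms unfolding generic_def inj_on_def by auto

lemma base_notin_chain_face_steps:
  assumes "\<forall>i<k. l i > 0" "X \<subseteq> fitting_subsets n k l y"
  shows "y \<notin> (\<lambda>C. y + sum l C) ` X"
proof
  assume "y \<in> (\<lambda>C. y + sum l C) ` X"
  then obtain C where C: "C \<in> X" "sum l C = 0" by auto
  then have "C \<subseteq> {..<k}" "C \<noteq> {}" using assms(2) unfolding fitting_subsets_def by auto
  then show False using C(2) assms(1) by (auto simp: finite_subset)
qed

lemma inj_on_chain_face:
  assumes "generic k l" "\<forall>i<k. l i > 0"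
  shows "inj_on (\<lambda>(y, X). chain_face l y X) (SIGMA y:UNIV. chains (fitting_subsets n k l y))"
proof (rule inj_onI, clarify)
  fix y X y' X'
  assume "X \<in> chains (fitting_subsets n k l y)" "X' \<in> chains (fitting_subsets n k l y')"
    and eq: "chain_face l y X = chain_face l y' X'"
  then have X: "X \<subseteq> fitting_subsets n k l y" "X' \<subseteq> fitting_subsets n k l y'"
    unfolding chains_def by auto
  have "y = Min (chain_face l y X)" "y' = Min (chain_face l y' X')"
    using X finite_subset[OF _ finite_fitting_subsets]
    by (auto simp: chain_face_def intro!: Min_eqI[symmetric])
  then have y: "y' = y" using eq by simp
  have "(\<lambda>C. y + sum l C) ` X = (\<lambda>C. y + sum l C) ` X'"
    using eq base_notin_chain_face_steps[OF assms(2) X(1)] base_notin_chain_face_steps[OF assms(2) X(2)]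
    unfolding chain_face_def y by (metis insert_ident)
  then have "(\<lambda>m. m - y) ` (\<lambda>C. y + sum l C) ` X = (\<lambda>m. m - y) ` (\<lambda>C. y + sum l C) ` X'"
    by simp
  then have "sum l ` X = sum l ` X'" by (simp add: image_image)
  moreover have "X \<subseteq> Pow {..<k}" "X' \<subseteq> Pow {..<k}" using X unfolding fitting_subsets_def by auto
  ultimately show "y = y' \<and> X = X'"
    using inj_on_image_eq_iff[OF inj_on_sum_generic[OF assms(1)]] y by blast
qed

lemma card_chain_face:
  assumes "generic k l" "\<forall>i<k. l i > 0" "X \<in> chains (fitting_subsets n k l y)"
  shows "card (chain_face l y X) = Suc (card X)"
proof -
  have X: "X \<subseteq> fitting_subsets n k l y" using assms(3) unfolding chains_def by auto
  then have "inj_on (sum l) X"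
    by (intro inj_on_subset[OF inj_on_sum_generic[OF assms(1)]]) (auto simp: fitting_subsets_def)
  then have "inj_on (\<lambda>C. y + sum l C) X" by (auto simp: inj_on_def)
  then have "card ((\<lambda>C. y + sum l C) ` X) = card X" by (rule card_image)
  then show ?thesis
    using base_notin_chain_face_steps[OF assms(2) X] finite_subset[OF X finite_fitting_subsets]
    unfolding chain_face_def by simp
qed

lemma fitting_subsets_down_closed:
  assumes "T \<in> fitting_subsets n k l y" "S \<subseteq> T" "S \<noteq> {}"
  shows "S \<in> fitting_subsets n k l y"
proof -
  have "sum l S \<le> sum l T"
    using assms by (intro sum_mono2) (auto simp: fitting_subsets_def finite_subset)
  then show ?thesis using assms unfolding fitting_subsets_def by auto
qed

lemma nonempty_tonnetz_faces:
  fixes l :: "nat \<Rightarrow> nat"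
  assumes "\<forall>i<k. l i > 0" "(\<Sum>i<k. l i) = n"
  shows "{F \<in> tonnetz n k l. F \<noteq> {}}
    = (\<lambda>(y, X). chain_face l y X) ` (SIGMA y:{..<n}. chains (fitting_subsets n k l y))"
proof (intro equalityI subsetI)
  fix F assume "F \<in> {F \<in> tonnetz n k l. F \<noteq> {}}"
  then obtain y X where "y < n" "X \<in> chains (fitting_subsets n k l y)" "F = chain_face l y X"
    using tonnetz_face_eq_chain_face[OF assms] by blast
  then show "F \<in> (\<lambda>(y, X). chain_face l y X) ` (SIGMA y:{..<n}. chains (fitting_subsets n k l y))"
    by force
next
  fix F assume "F \<in> (\<lambda>(y, X). chain_face l y X) ` (SIGMA y:{..<n}. chains (fitting_subsets n k l y))"
  then show "F \<in> {F \<in> tonnetz n k l. F \<noteq> {}}"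
    using chain_face_in_tonnetz[OF assms(2)] by (auto simp: chain_face_def)
qed

lemma euler_char_tonnetz_eq_sum_chains:
  fixes l :: "nat \<Rightarrow> nat"
  assumes "generic k l" "\<forall>i<k. l i > 0" "(\<Sum>i<k. l i) = n"
  shows "euler_char (tonnetz n k l) = (\<Sum>y<n. \<Sum>X\<in>chains (fitting_subsets n k l y). (-1) ^ card X)"
proof -
  let ?P = "SIGMA y:{..<n}. chains (fitting_subsets n k l y)"
  have inj: "inj_on (\<lambda>(y, X). chain_face l y X) ?P"
    by (rule inj_on_subset[OF inj_on_chain_face[OF assms(1,2)]]) auto
  have "euler_char (tonnetz n k l) = (\<Sum>(y, X)\<in>?P. (-1) ^ (card (chain_face l y X) - 1))"
    unfolding euler_char_def nonempty_tonnetz_faces[OF assms(2,3)] sum.reindex[OF inj]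
    by (simp add: case_prod_beta')
  also have "\<dots> = (\<Sum>(y, X)\<in>?P. (-1) ^ card X)"
    by (intro sum.cong) (auto simp: card_chain_face[OF assms(1,2)])
  also have "\<dots> = (\<Sum>y<n. \<Sum>X\<in>chains (fitting_subsets n k l y). (-1) ^ card X)"
    by (subst sum.Sigma) (auto simp: finite_chains finite_fitting_subsets)
  finally show ?thesis .
qed

lemma sum_fitting_subsets_eq:
  fixes l :: "nat \<Rightarrow> nat"
  assumes "(\<Sum>i<k. l i) = n"
  shows "(\<Sum>y<n. 1 + (\<Sum>T\<in>fitting_subsets n k l y. (-1) ^ card T))
    = (\<Sum>T\<in>Pow {..<k}. (-1) ^ card T * (int n - (\<Sum>i\<in>T. int (l i))))"
proof -
  have "{T\<in>Pow {..<k}. y + sum l T < n} = insert {} (fitting_subsets n k l y)" if "y < n" for y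
    using that unfolding fitting_subsets_def by auto
  then have "(\<Sum>y<n. 1 + (\<Sum>T\<in>fitting_subsets n k l y. (-1) ^ card T))
      = (\<Sum>y<n. \<Sum>T\<in>{T\<in>Pow {..<k}. y + sum l T < n}. (-1) ^ card T :: int)"
    by (intro sum.cong) (auto simp: finite_fitting_subsets fitting_subsets_def)
  also have "\<dots> = (\<Sum>T\<in>Pow {..<k}. \<Sum>y\<in>{y\<in>{..<n}. y + sum l T < n}. (-1) ^ card T)"
    by (rule sum.swap_restrict) auto
  also have "\<dots> = (\<Sum>T\<in>Pow {..<k}. (-1) ^ card T * (int n - (\<Sum>i\<in>T. int (l i))))"
  proof (intro sum.cong refl)
    fix T assume "T \<in> Pow {..<k}"
    then have "sum l T \<le> n" using assms by (auto intro: sum_mono2[of "{..<k}", THEN order.trans])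
    moreover have "{y\<in>{..<n}. y + sum l T < n} = {..<n - sum l T}" by auto
    ultimately show "(\<Sum>y\<in>{y\<in>{..<n}. y + sum l T < n}. (-1) ^ card T)
        = (-1) ^ card T * (int n - (\<Sum>i\<in>T. int (l i)))"
      by (simp add: of_nat_diff)
  qed
  finally show ?thesis .
qed

theorem proposition2p6:
  fixes n k :: nat and l :: "nat \<Rightarrow> nat"
  assumes "k \<ge> 2"
    and "\<forall>i<k. l i > 0"
    and "(\<Sum>i<k. l i) = n"
    and "generic k l"
    and "reduced k l"
  shows "euler_char (tonnetz n k l) = 0"
proof -
  have "euler_char (tonnetz n k l) = (\<Sum>y<n. \<Sum>X\<in>chains (fitting_subsets n k l y). (-1) ^ card X)"
    using euler_char_tonnetz_eq_sum_chains assms(2-4) by blast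
  also have "\<dots> = (\<Sum>y<n. 1 + (\<Sum>T\<in>fitting_subsets n k l y. (-1) ^ card T))"
    by (intro sum.cong refl
        alternating_sum_chains_down_closed[OF finite_fitting_subsets _ fitting_subsets_down_closed])
      (simp add: fitting_subsets_def)
  also have "\<dots> = (\<Sum>T\<in>Pow {..<k}. (-1) ^ card T * (int n - (\<Sum>i\<in>T. int (l i))))"
    using sum_fitting_subsets_eq assms(3) .
  also have "\<dots> = int n * (\<Sum>T\<in>Pow {..<k}. (-1) ^ card T)
      - (\<Sum>T\<in>Pow {..<k}. (-1) ^ card T * (\<Sum>i\<in>T. int (l i)))"
    by (simp add: algebra_simps sum_subtractf sum_distrib_left)
  also have "\<dots> = 0"
    using assms(1) alternating_sum_Pow_eq_0[of "{..<k}", where 'a = int]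
      alternating_sum_Pow_sum_eq_0[of "{..<k}" "\<lambda>i. int (l i)"]
    by (simp add: lessThan_empty_iff)
  finally show ?thesis .
qed

end
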